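(* Let $d\in\mathbb{N}$, $\sigma>0$ and $\sigma_0\geq 0$. Let $H_{\sigma,\sigma_0,\mathbb{C}^d}$ denote the space of holomorphic functions $f:\mathbb{C}^d\to\mathbb{C}$ with $\|f\|_{\sigma,\sigma_0,\mathbb{C}^d}<\infty$, equipped with the inner product $$\langle f,g\rangle_{\sigma,\sigma_0,\mathbb{C}^d}=\left(\frac{e\sigma^2}{2\pi}\right)^d\int_{\mathbb{C}^d}f(\boldsymbol{z})\overline{g(\boldsymbol{z})}\,e^{-\sigma^2|\boldsymbol{z}|^2}\,e^{e^{-\sigma_0^2|\boldsymbol{z}|^2}-1}\,dV_{\mathbb{C}^d}(\boldsymbol{z})$$ and the induced norm $\|f\|_{\sigma,\sigma_0,\mathbb{C}^d}=\langle f,f\rangle_{\sigma,\sigma_0,\mathbb{C}^d}^{1/2}$. Then $\left(H_{\sigma,\sigma_0,\mathbb{C}^d},\langle\cdot,\cdot\rangle_{\sigma,\sigma_0,\mathbb{C}^d}\right)$ is a reproducing kernel Hilbert space, i.e. it is a Hilbert space of functions on $\mathbb{C}^d$ on which, for every $\boldsymbol{z}\in\mathbb{C}^d$, the evaluation functional $f\mapsto f(\boldsymbol{z})$ is continuous.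
   Context: $dV_{\mathbb{C}^d}$ is Lebesgue measure on $\mathbb{C}^d\cong\mathbb{R}^{2d}$, and for $\boldsymbol{z}=(z_1,\dots,z_d)\in\mathbb{C}^d$, $|\boldsymbol{z}|^2=\sum_{j=1}^d|z_j|^2$. *)

theory Defs
  imports "HOL-Analysis.Analysis"
begin

text \<open>Points of C^d are vectors of type complex^'n, with d = CARD('n); the norm on
  complex^'n is the Euclidean norm, so norm z ^ 2 = sum of |z_j|^2, and lborel on
  complex^'n is Lebesgue measure on R^(2d).\<close>

definition holomorphic_Cd :: "(complex ^ 'n \<Rightarrow> complex) \<Rightarrow> bool" where
  "holomorphic_Cd f \<longleftrightarrow>
     (\<forall>z. \<exists>L. (f has_derivative L) (at z) \<and> (\<forall>(c::complex) v. L (c *s v) = c * L v))"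

definition weight :: "real \<Rightarrow> real \<Rightarrow> complex ^ 'n \<Rightarrow> real" where
  "weight \<sigma> \<sigma>0 z =
     (exp 1 * \<sigma>\<^sup>2 / (2 * pi)) ^ CARD('n)
     * exp (- (\<sigma>\<^sup>2 * (norm z)\<^sup>2)) * exp (exp (- (\<sigma>0\<^sup>2 * (norm z)\<^sup>2)) - 1)"

definition inner_H :: "real \<Rightarrow> real \<Rightarrow> (complex ^ 'n \<Rightarrow> complex) \<Rightarrow> (complex ^ 'n \<Rightarrow> complex) \<Rightarrow> complex" where
  "inner_H \<sigma> \<sigma>0 f g = (LINT z|lborel. f z * cnj (g z) * complex_of_real (weight \<sigma> \<sigma>0 z))"

definition H_space :: "real \<Rightarrow> real \<Rightarrow> (complex ^ 'n \<Rightarrow> complex) set" where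
  "H_space \<sigma> \<sigma>0 = {f. holomorphic_Cd f \<and>
      integrable lborel (\<lambda>z. (cmod (f z))\<^sup>2 * weight \<sigma> \<sigma>0 z)}"

definition is_RKHS :: "('a \<Rightarrow> complex) set \<Rightarrow> (('a \<Rightarrow> complex) \<Rightarrow> ('a \<Rightarrow> complex) \<Rightarrow> complex) \<Rightarrow> bool" where
  "is_RKHS H ip \<longleftrightarrow>
    (let nrm = (\<lambda>f. sqrt (Re (ip f f))) in
     (\<lambda>x. 0) \<in> H
     \<and> (\<forall>f\<in>H. \<forall>g\<in>H. (\<lambda>x. f x + g x) \<in> H)
     \<and> (\<forall>c. \<forall>f\<in>H. (\<lambda>x. c * f x) \<in> H)
     \<and> (\<forall>f\<in>H. \<forall>g\<in>H. \<forall>h\<in>H. ip (\<lambda>x. f x + g x) h = ip f h + ip g h)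
     \<and> (\<forall>c. \<forall>f\<in>H. \<forall>g\<in>H. ip (\<lambda>x. c * f x) g = c * ip f g)
     \<and> (\<forall>f\<in>H. \<forall>g\<in>H. ip g f = cnj (ip f g))
     \<and> (\<forall>f\<in>H. Im (ip f f) = 0 \<and> Re (ip f f) \<ge> 0)
     \<and> (\<forall>f\<in>H. ip f f = 0 \<longrightarrow> f = (\<lambda>x. 0))
     \<and> (\<forall>F. (\<forall>n. F n \<in> H) \<and>
            (\<forall>e>0. \<exists>N. \<forall>m\<ge>N. \<forall>n\<ge>N. nrm (\<lambda>x. F m x - F n x) < e)
            \<longrightarrow> (\<exists>f\<in>H. (\<lambda>n. nrm (\<lambda>x. F n x - f x)) \<longlonglongrightarrow> 0))
     \<and> (\<forall>x. \<forall>F f. (\<forall>n. F n \<in> H) \<and> f \<in> H \<and> (\<lambda>n. nrm (\<lambda>y. F n y - f y)) \<longlonglongrightarrow> 0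
            \<longrightarrow> (\<lambda>n. F n x) \<longlonglongrightarrow> f x))"

end

theory Submission
  imports Defs "HOL-Complex_Analysis.Complex_Analysis"
begin

(* The evaluation functionals are bounded, locally uniformly in the point. For holomorphic f,
   |f z|^2 is at most the mean of |f|^2 over the unit ball around z: apply the mean value
   property on each complex line through z and average over all directions. The averaging only
   needs Lebesgue measure on C^d to be invariant under multiplication by a unimodular scalar,
   which is a real rotation and hence a product of three shears. Since the weight is bounded
   below by a positive constant on bounded sets, |f z| is at most a constant times the norm of f.
   Consequently a Cauchy sequence in H converges locally uniformly. The limit is holomorphic
   because, by the Cauchy estimates, the derivatives converge locally uniformly as well, and
   Fatou's lemma puts it in H and makes it the limit in norm. *)

lemma borel_measurable_linear:
  fixes T :: "'a::euclidean_space \<Rightarrow> 'b::euclidean_space"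
  shows "linear T \<Longrightarrow> T \<in> borel_measurable borel"
  by (intro borel_measurable_continuous_onI linear_continuous_on)
     (simp add: linear_conv_bounded_linear)

lemma inner_linear_Basis_bij:
  fixes T :: "'a::euclidean_space \<Rightarrow> 'b::euclidean_space"
  assumes T: "linear T" "bij_betw T Basis Basis" and b: "b \<in> Basis"
  shows "T x \<bullet> T b = x \<bullet> b"
proof -
  have rep: "T x = (\<Sum>b'\<in>Basis. (x \<bullet> b') *\<^sub>R T b')"
    by (subst euclidean_representation[symmetric, of x])
       (simp add: linear_sum[OF T(1)] linear_scale[OF T(1)])
  have "T b' \<bullet> T b = (if b' = b then 1 else 0)" if "b' \<in> Basis" for b'
    using T(2) b that by (auto simp: inner_Basis bij_betwE bij_betw_def dest: inj_onD)
  then have "T x \<bullet> T b = (\<Sum>b'\<in>Basis. (x \<bullet> b') * (if b' = b then 1 else 0))"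
    by (simp add: rep inner_sum_left)
  then show ?thesis using b by (simp add: if_distrib cong: if_cong)
qed

lemma distr_lborel_linear_Basis_bij:
  fixes T :: "'a::euclidean_space \<Rightarrow> 'b::euclidean_space"
  assumes T: "linear T" "bij_betw T Basis Basis"
  shows "distr lborel borel T = lborel"
proof (rule lborel_eqI[symmetric])
  fix l u :: 'b
  assume le: "\<And>b. b \<in> Basis \<Longrightarrow> l \<bullet> b \<le> u \<bullet> b"
  define pull where "pull y = (\<Sum>b\<in>Basis. (y \<bullet> T b) *\<^sub>R b)" for y
  have pull: "pull y \<bullet> b = y \<bullet> T b" if "b \<in> Basis" for y b
    using that by (simp add: pull_def inner_sum_left inner_Basis if_distrib cong: if_cong)
  have TB: "T ` Basis = Basis"
    using T(2) by (simp add: bij_betw_def)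
  have preimage: "T -` box l u = box (pull l) (pull u)"
  proof -
    have "T x \<in> box l u \<longleftrightarrow> (\<forall>b\<in>T ` Basis. l \<bullet> b < T x \<bullet> b \<and> T x \<bullet> b < u \<bullet> b)" for x
      by (simp only: mem_box TB)
    then show ?thesis
      by (auto simp: mem_box pull inner_linear_Basis_bij[OF T])
  qed
  have "emeasure (distr lborel borel T) (box l u) = emeasure lborel (box (pull l) (pull u))"
    by (simp add: emeasure_distr borel_measurable_linear[OF T(1)] preimage)
  also have "\<dots> = (\<Prod>b\<in>Basis. (u - l) \<bullet> T b)"
    using le T(2) by (simp add: pull inner_diff_left bij_betwE)
  also have "\<dots> = (\<Prod>b\<in>Basis. (u - l) \<bullet> b)"
    using prod.reindex_bij_betw[OF T(2), of "\<lambda>b. (u - l) \<bullet> b"] by simp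
  finally show "emeasure (distr lborel borel T) (box l u) = (\<Prod>b\<in>Basis. (u - l) \<bullet> b)" 
    by simp
qed simp

definition cvec_of_pair :: "(real^'n) \<times> (real^'n) \<Rightarrow> complex^'n" where
  "cvec_of_pair p = (\<chi> i. Complex ((fst p) $ i) ((snd p) $ i))"

lemma linear_cvec_of_pair: "linear cvec_of_pair"
  by (rule linearI) (auto simp: cvec_of_pair_def vec_eq_iff complex_eq_iff)

lemma bij_betw_cvec_of_pair_Basis: "bij_betw cvec_of_pair Basis Basis"
proof -
  have "cvec_of_pair (axis i 1, 0) = axis i 1" "cvec_of_pair (0, axis i 1) = axis i \<i>" for i
    by (simp_all add: cvec_of_pair_def axis_def vec_eq_iff complex_eq_iff)
  then have "cvec_of_pair ` Basis = Basis"
    by (auto simp: Basis_prod_def Basis_vec_def Basis_complex_def image_Un image_UN)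
  moreover have "inj cvec_of_pair"
    by (auto simp: inj_def cvec_of_pair_def vec_eq_iff complex_eq_iff prod_eq_iff)
  ultimately show ?thesis
    by (metis bij_betw_def inj_on_subset subset_UNIV)
qed

lemma distr_lborel_cvec_of_pair: "distr lborel borel cvec_of_pair = lborel"
  by (rule distr_lborel_linear_Basis_bij[OF linear_cvec_of_pair bij_betw_cvec_of_pair_Basis])

lemma nn_integral_lborel_translate:
  fixes g :: "'a::euclidean_space \<Rightarrow> ennreal"
  assumes [measurable]: "g \<in> borel_measurable borel"
  shows "(\<integral>\<^sup>+x. g (x + c) \<partial>lborel) = (\<integral>\<^sup>+x. g x \<partial>lborel)"
proof -
  have "(\<integral>\<^sup>+x. g x \<partial>lborel) = (\<integral>\<^sup>+x. g x \<partial>distr lborel borel ((+) c))"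
    by (simp add: lborel_distr_plus)
  then show ?thesis
    by (simp add: nn_integral_distr add.commute)
qed

lemma nn_integral_lborel_shear_fst:
  fixes g :: "'a::euclidean_space \<times> 'b::euclidean_space \<Rightarrow> ennreal" and h :: "'b \<Rightarrow> 'a"
  assumes [measurable]: "g \<in> borel_measurable borel" "h \<in> borel_measurable borel"
  shows "(\<integral>\<^sup>+p. g (fst p + h (snd p), snd p) \<partial>lborel) = (\<integral>\<^sup>+p. g p \<partial>lborel)"
proof -
  have [measurable]: "g \<in> borel_measurable (lborel \<Otimes>\<^sub>M lborel)"
    by (simp add: lborel_prod)
  have "(\<lambda>p. g (fst p + h (snd p), snd p)) \<in> borel_measurable (lborel \<Otimes>\<^sub>M lborel)"
    by measurable
  from lborel_pair.nn_integral_snd[OF this]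
  have "(\<integral>\<^sup>+p. g (fst p + h (snd p), snd p) \<partial>lborel) = (\<integral>\<^sup>+y. \<integral>\<^sup>+x. g (x + h y, y) \<partial>lborel \<partial>lborel)"
    by (simp add: lborel_prod)
  also have "\<dots> = (\<integral>\<^sup>+y. \<integral>\<^sup>+x. g (x, y) \<partial>lborel \<partial>lborel)"
  proof (rule nn_integral_cong)
    fix y
    have "(\<lambda>x. g (x, y)) \<in> borel_measurable borel"
      by measurable
    then show "(\<integral>\<^sup>+x. g (x + h y, y) \<partial>lborel) = (\<integral>\<^sup>+x. g (x, y) \<partial>lborel)"
      by (rule nn_integral_lborel_translate)
  qed
  also have "\<dots> = (\<integral>\<^sup>+p. g p \<partial>lborel)"
    using lborel_pair.nn_integral_snd[of g] by (simp add: lborel_prod)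
  finally show ?thesis .
qed

lemma nn_integral_lborel_shear_snd:
  fixes g :: "'a::euclidean_space \<times> 'b::euclidean_space \<Rightarrow> ennreal" and h :: "'a \<Rightarrow> 'b"
  assumes [measurable]: "g \<in> borel_measurable borel" "h \<in> borel_measurable borel"
  shows "(\<integral>\<^sup>+p. g (fst p, snd p + h (fst p)) \<partial>lborel) = (\<integral>\<^sup>+p. g p \<partial>lborel)"
proof -
  have [measurable]: "g \<in> borel_measurable (lborel \<Otimes>\<^sub>M lborel)"
    by (simp add: lborel_prod)
  have "(\<lambda>p. g (fst p, snd p + h (fst p))) \<in> borel_measurable (lborel \<Otimes>\<^sub>M lborel)"
    by measurable
  from lborel.nn_integral_fst[OF this]
  have "(\<integral>\<^sup>+p. g (fst p, snd p + h (fst p)) \<partial>lborel) = (\<integral>\<^sup>+x. \<integral>\<^sup>+y. g (x, y + h x) \<partial>lborel \<partial>lborel)"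
    by (simp add: lborel_prod)
  also have "\<dots> = (\<integral>\<^sup>+x. \<integral>\<^sup>+y. g (x, y) \<partial>lborel \<partial>lborel)"
  proof (rule nn_integral_cong)
    fix x
    have "(\<lambda>y. g (x, y)) \<in> borel_measurable borel"
      by measurable
    then show "(\<integral>\<^sup>+y. g (x, y + h x) \<partial>lborel) = (\<integral>\<^sup>+y. g (x, y) \<partial>lborel)"
      by (rule nn_integral_lborel_translate)
  qed
  also have "\<dots> = (\<integral>\<^sup>+p. g p \<partial>lborel)"
    using lborel.nn_integral_fst[of g lborel] by (simp add: lborel_prod)
  finally show ?thesis .
qed

lemma nn_integral_lborel_rotate:
  fixes g :: "'a::euclidean_space \<times> 'a \<Rightarrow> ennreal"
  assumes [measurable]: "g \<in> borel_measurable borel" and cs: "c\<^sup>2 + s\<^sup>2 = 1" "s \<noteq> 0"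
  shows "(\<integral>\<^sup>+p. g (c *\<^sub>R fst p - s *\<^sub>R snd p, s *\<^sub>R fst p + c *\<^sub>R snd p) \<partial>lborel) = (\<integral>\<^sup>+p. g p \<partial>lborel)"
proof -
  (* Paeth: the rotation is the product of the shears by a = (c - 1) / s in the first
     coordinate, by s in the second, and by a in the first again. *)
  define a where "a = (c - 1) / s"
  have a1: "1 + a * s = c"
    using cs by (simp add: a_def field_simps)
  have a2: "2 * a + a\<^sup>2 * s = - s"
    using cs by (simp add: a_def field_simps power2_eq_square) algebra
  define g1 where "g1 p = g (fst p + a *\<^sub>R snd p, snd p)" for p
  define g2 where "g2 p = g1 (fst p, snd p + s *\<^sub>R fst p)" for p
  have continuous_comp: "(\<lambda>p. g (T p)) \<in> borel_measurable borel" if "continuous_on UNIV T" for T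
    using measurable_compose[OF borel_measurable_continuous_onI[OF that] assms(1)] by simp
  have [measurable]: "g1 \<in> borel_measurable borel" "g2 \<in> borel_measurable borel"
    unfolding g1_def[abs_def] g2_def[abs_def] by (intro continuous_comp continuous_intros)+
  have "g (c *\<^sub>R x - s *\<^sub>R y, s *\<^sub>R x + c *\<^sub>R y) = g2 (x + a *\<^sub>R y, y)" for x y
  proof -
    have "x + a *\<^sub>R y + a *\<^sub>R (y + s *\<^sub>R (x + a *\<^sub>R y)) = (1 + a * s) *\<^sub>R x + (2 * a + a\<^sup>2 * s) *\<^sub>R y"
      "y + s *\<^sub>R (x + a *\<^sub>R y) = s *\<^sub>R x + (1 + a * s) *\<^sub>R y"
      by (simp_all add: euclidean_eq_iff[where 'a='a] algebra_simps power2_eq_square)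
    then show ?thesis
      by (simp add: g1_def g2_def a1 a2)
  qed
  then have "(\<integral>\<^sup>+p. g (c *\<^sub>R fst p - s *\<^sub>R snd p, s *\<^sub>R fst p + c *\<^sub>R snd p) \<partial>lborel)
      = (\<integral>\<^sup>+p. g2 (fst p + a *\<^sub>R snd p, snd p) \<partial>lborel)"
    by simp
  also have "\<dots> = (\<integral>\<^sup>+p. g1 (fst p, snd p + s *\<^sub>R fst p) \<partial>lborel)"
    by (simp add: nn_integral_lborel_shear_fst g2_def[symmetric])
  also have "\<dots> = (\<integral>\<^sup>+p. g (fst p + a *\<^sub>R snd p, snd p) \<partial>lborel)"
    by (simp add: nn_integral_lborel_shear_snd g1_def[symmetric])
  also have "\<dots> = (\<integral>\<^sup>+p. g p \<partial>lborel)"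
    by (simp add: nn_integral_lborel_shear_fst)
  finally show ?thesis .
qed

lemma nn_integral_lborel_cvec_of_pair:
  fixes g :: "complex^'n \<Rightarrow> ennreal"
  assumes "g \<in> borel_measurable borel"
  shows "(\<integral>\<^sup>+v. g v \<partial>lborel) = (\<integral>\<^sup>+p. g (cvec_of_pair p) \<partial>lborel)"
proof -
  have "(\<integral>\<^sup>+v. g v \<partial>lborel) = (\<integral>\<^sup>+v. g v \<partial>distr lborel borel cvec_of_pair)"
    by (simp add: distr_lborel_cvec_of_pair)
  also have "\<dots> = (\<integral>\<^sup>+p. g (cvec_of_pair p) \<partial>lborel)"
    using assms by (intro nn_integral_distr) (simp_all add: borel_measurable_linear linear_cvec_of_pair)
  finally show ?thesis .
qed

lemma linear_vector_smult: "linear (\<lambda>v::'a::real_algebra^'n. w *s v)"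
  by (rule linearI) (simp_all add: vec_eq_iff algebra_simps)

lemma borel_measurable_comp_linear:
  fixes T :: "'a::euclidean_space \<Rightarrow> 'b::euclidean_space"
  shows "g \<in> borel_measurable borel \<Longrightarrow> linear T \<Longrightarrow> (\<lambda>x. g (T x)) \<in> borel_measurable borel"
  using measurable_compose[OF borel_measurable_linear] by blast

lemma nn_integral_lborel_unimodular_scale_nonreal:
  fixes g :: "complex^'n \<Rightarrow> ennreal"
  assumes g: "g \<in> borel_measurable borel" and w: "cmod w = 1" "Im w \<noteq> 0"
  shows "(\<integral>\<^sup>+v. g (w *s v) \<partial>lborel) = (\<integral>\<^sup>+v. g v \<partial>lborel)"
proof -
  have cs: "(Re w)\<^sup>2 + (Im w)\<^sup>2 = 1"
    using w(1) by (simp add: cmod_def)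
  have rot: "w *s cvec_of_pair p =
      cvec_of_pair (Re w *\<^sub>R fst p - Im w *\<^sub>R snd p, Im w *\<^sub>R fst p + Re w *\<^sub>R snd p)" for p
    by (simp add: cvec_of_pair_def vec_eq_iff complex_eq_iff)
  have "(\<lambda>v. g (w *s v)) \<in> borel_measurable borel"
    using g linear_vector_smult by (rule borel_measurable_comp_linear)
  then have "(\<integral>\<^sup>+v. g (w *s v) \<partial>lborel) = (\<integral>\<^sup>+p. g (w *s cvec_of_pair p) \<partial>lborel)"
    by (rule nn_integral_lborel_cvec_of_pair)
  also have "\<dots> = (\<integral>\<^sup>+p. g (cvec_of_pair p) \<partial>lborel)"
    unfolding rot
    by (rule nn_integral_lborel_rotate[OF borel_measurable_comp_linear[OF g linear_cvec_of_pair] cs w(2)])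
  also have "\<dots> = (\<integral>\<^sup>+v. g v \<partial>lborel)"
    by (rule nn_integral_lborel_cvec_of_pair[OF g, symmetric])
  finally show ?thesis .
qed

lemma nn_integral_lborel_unimodular_scale:
  fixes g :: "complex^'n \<Rightarrow> ennreal"
  assumes g: "g \<in> borel_measurable borel" and w: "cmod w = 1"
  shows "(\<integral>\<^sup>+v. g (w *s v) \<partial>lborel) = (\<integral>\<^sup>+v. g v \<partial>lborel)"
proof (cases "Im w = 0")
  case False
  with g w show ?thesis
    by (rule nn_integral_lborel_unimodular_scale_nonreal)
next
  (* the shear factorisation needs Im w \<noteq> 0; the remaining case w = -1 is \<i> * \<i> *)
  case True
  with w have "w = 1 \<or> w = -1"
    by (auto simp: cmod_def complex_eq_iff abs_if split: if_splits)
  moreover have "(\<integral>\<^sup>+v. g (- v) \<partial>lborel) = (\<integral>\<^sup>+v. g v \<partial>lborel)"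
  proof -
    have "\<i> *s (\<i> *s v) = - v" for v :: "complex^'n"
      by (simp add: vec_eq_iff)
    then have "(\<integral>\<^sup>+v. g (- v) \<partial>lborel) = (\<integral>\<^sup>+v. g (\<i> *s (\<i> *s v)) \<partial>lborel)"
      by simp
    also have "\<dots> = (\<integral>\<^sup>+v. g (\<i> *s v) \<partial>lborel)"
      using borel_measurable_comp_linear[OF g linear_vector_smult]
      by (rule nn_integral_lborel_unimodular_scale_nonreal) simp_all
    also have "\<dots> = (\<integral>\<^sup>+v. g v \<partial>lborel)"
      using g by (rule nn_integral_lborel_unimodular_scale_nonreal) simp_all
    finally show ?thesis .
  qed
  ultimately show ?thesis
    by (auto simp: vec_eq_iff[of "(-1) *s _"])
qed

lemma norm_vector_smult: "norm (w *s (v::'a::real_normed_div_algebra^'n)) = norm w * norm v"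
  unfolding norm_vec_def by (simp add: L2_set_right_distrib norm_mult)

lemma continuous_on_vector_smult_cis:
  "continuous_on UNIV (\<lambda>p::(complex^'n) \<times> real. cis (snd p) *s fst p)"
proof -
  have eq: "(\<lambda>p::(complex^'n) \<times> real. cis (snd p) *s fst p) = (\<lambda>p. \<chi> i. cis (snd p) * (fst p $ i))"
    by (simp add: fun_eq_iff vec_eq_iff)
  show ?thesis
    unfolding eq by (intro continuous_intros)
qed

lemma nn_integral_circle_average:
  fixes G :: "complex^'n \<Rightarrow> ennreal"
  assumes G: "G \<in> borel_measurable borel"
  shows "(\<integral>\<^sup>+v. \<integral>\<^sup>+t. G (cis t *s v) * indicator {0..2*pi} t \<partial>lborel \<partial>lborel)
    = ennreal (2 * pi) * (\<integral>\<^sup>+v. G v \<partial>lborel)"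
proof -
  have "(\<lambda>p. G (cis (snd p) *s fst p)) \<in> borel_measurable borel"
    using measurable_compose[OF borel_measurable_continuous_onI[OF continuous_on_vector_smult_cis] G] .
  then have [measurable]: "(\<lambda>p. G (cis (snd p) *s fst p)) \<in> borel_measurable (lborel \<Otimes>\<^sub>M lborel)"
    by (simp add: lborel_prod)
  have joint: "(\<lambda>p. G (cis (snd p) *s fst p) * indicator {0..2*pi} (snd p)) \<in> borel_measurable (lborel \<Otimes>\<^sub>M lborel)"
    by measurable
  have "(\<integral>\<^sup>+v. \<integral>\<^sup>+t. G (cis t *s v) * indicator {0..2*pi} t \<partial>lborel \<partial>lborel)
      = (\<integral>\<^sup>+t. \<integral>\<^sup>+v. G (cis t *s v) * indicator {0..2*pi} t \<partial>lborel \<partial>lborel)"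
    using lborel_pair.Fubini[OF joint] by simp
  also have "\<dots> = (\<integral>\<^sup>+t. (\<integral>\<^sup>+v. G v \<partial>lborel) * indicator {0..2*pi} t \<partial>lborel)"
  proof (rule nn_integral_cong)
    fix t :: real
    have [measurable]: "(\<lambda>v. G (cis t *s v)) \<in> borel_measurable borel"
      using G linear_vector_smult by (rule borel_measurable_comp_linear)
    show "(\<integral>\<^sup>+v. G (cis t *s v) * indicator {0..2*pi} t \<partial>lborel) = (\<integral>\<^sup>+v. G v \<partial>lborel) * indicator {0..2*pi} t"
      using nn_integral_lborel_unimodular_scale[OF G, of "cis t"] by (simp add: nn_integral_multc)
  qed
  also have "\<dots> = ennreal (2 * pi) * (\<integral>\<^sup>+v. G v \<partial>lborel)"
    by (simp add: nn_integral_cmult_indicator mult.commute)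
  finally show ?thesis .
qed

lemma holomorphic_Cd_derivative_complex_linear:
  assumes "holomorphic_Cd f" and "(f has_derivative L) (at z)"
  shows "L (c *s v) = c * L v"
proof -
  obtain L' where "(f has_derivative L') (at z)" and "\<And>(c::complex) v. L' (c *s v) = c * L' v"
    using assms(1) unfolding holomorphic_Cd_def by blast
  with has_derivative_unique[OF assms(2)] show ?thesis
    by metis
qed

lemma holomorphic_Cd_continuous_on:
  assumes "holomorphic_Cd f"
  shows "continuous_on S f"
proof -
  have "isCont f z" for z
    using assms unfolding holomorphic_Cd_def by (metis has_derivative_continuous)
  then show ?thesis
    by (simp add: continuous_at_imp_continuous_on)
qed

lemma holomorphic_Cd_diff:
  assumes "holomorphic_Cd f" "holomorphic_Cd g"
  shows "holomorphic_Cd (\<lambda>x. f x - g x)"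
  unfolding holomorphic_Cd_def
proof
  fix z
  obtain Lf Lg where "(f has_derivative Lf) (at z)" "(g has_derivative Lg) (at z)"
    using assms unfolding holomorphic_Cd_def by blast
  with assms show "\<exists>L. ((\<lambda>x. f x - g x) has_derivative L) (at z) \<and> (\<forall>c v. L (c *s v) = c * L v)"
    by (intro exI[of _ "\<lambda>v. Lf v - Lg v"])
       (auto intro: has_derivative_diff simp: holomorphic_Cd_derivative_complex_linear right_diff_distrib)
qed

lemma holomorphic_Cd_cmult:
  assumes "holomorphic_Cd f"
  shows "holomorphic_Cd (\<lambda>x. c * f x)"
  unfolding holomorphic_Cd_def
proof
  fix z
  obtain L where "(f has_derivative L) (at z)"
    using assms unfolding holomorphic_Cd_def by blast
  with assms show "\<exists>L. ((\<lambda>x. c * f x) has_derivative L) (at z) \<and> (\<forall>c' v. L (c' *s v) = c' * L v)"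
    by (intro exI[of _ "\<lambda>v. c * L v"])
       (auto intro: has_derivative_mult_right simp: holomorphic_Cd_derivative_complex_linear mult.left_commute)
qed

lemma holomorphic_Cd_add:
  assumes "holomorphic_Cd f" "holomorphic_Cd g"
  shows "holomorphic_Cd (\<lambda>x. f x + g x)"
  using holomorphic_Cd_diff[OF assms(1) holomorphic_Cd_cmult[OF assms(2), of "-1"]] by simp

lemma has_field_derivative_complex_line:
  fixes f :: "complex^'n \<Rightarrow> complex"
  assumes "(f has_derivative L) (at (z + t *s v))" and "\<And>c u. L (c *s u) = c * L u"
  shows "((\<lambda>t. f (z + t *s v)) has_field_derivative L v) (at t)"
proof -
  have "bounded_linear (\<lambda>h::complex. h *s v)"
    unfolding linear_conv_bounded_linear[symmetric]
    by (rule linearI) (simp_all add: vec_eq_iff algebra_simps)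
  then have "((\<lambda>t. z + t *s v) has_derivative (\<lambda>h. h *s v)) (at t)"
    by (auto intro!: derivative_eq_intros bounded_linear_imp_has_derivative)
  from has_derivative_compose[OF this assms(1)]
  have "((\<lambda>t. f (z + t *s v)) has_derivative (\<lambda>h. L v * h)) (at t)"
    by (simp add: o_def assms(2) mult.commute)
  then show ?thesis
    by (simp add: has_field_derivative_def)
qed

lemma holomorphic_Cd_complex_line:
  assumes "holomorphic_Cd f"
  shows "(\<lambda>t. f (z + t *s v)) holomorphic_on S"
proof -
  have "(\<lambda>t. f (z + t *s v)) field_differentiable (at t)" for t
    using assms unfolding holomorphic_Cd_def field_differentiable_def
    by (metis has_field_derivative_complex_line)
  then show ?thesis
    by (simp add: holomorphic_on_def field_differentiable_at_within)
qed

lemma holomorphic_circle_mean: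
  fixes h :: "complex \<Rightarrow> complex" and r :: real
  assumes "continuous_on (cball z r) h" "h holomorphic_on ball z r" "r > 0"
  shows "((\<lambda>t. h (z + r * cis t)) has_integral (2 * pi * h z)) {0..2*pi}"
proof -
  have "((\<lambda>u. h u / (u - z)) has_contour_integral (2 * pi * \<i> * h z)) (circlepath z r)"
    using Cauchy_integral_circlepath[OF assms(1,2), of z] assms(3) by simp
  then have "((\<lambda>t. \<i> * h (z + r * cis t)) has_integral \<i> * (2 * pi * h z)) {0..2*pi}"
    using assms(3) unfolding circlepath_def
    by (subst (asm) has_contour_integral_part_circlepath_iff) (auto simp: field_simps)
  from has_integral_mult_right[OF this, of "- \<i>"] show ?thesis
    by simp
qed

lemma holomorphic_sq_norm_le_circle_integral:
  fixes h :: "complex \<Rightarrow> complex"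
  assumes "h holomorphic_on UNIV"
  shows "2 * pi * (cmod (h 0))\<^sup>2 \<le> integral {0..2*pi} (\<lambda>t. (cmod (h (cis t)))\<^sup>2)"
proof -
  have cont: "continuous_on S h" for S
    using assms holomorphic_on_imp_continuous_on holomorphic_on_subset by blast
  have "(\<lambda>u. h u * h u) holomorphic_on UNIV"
    using assms by (intro holomorphic_intros)
  with holomorphic_circle_mean[of 0 1 "\<lambda>u. h u * h u"]
  have "((\<lambda>t. h (cis t) * h (cis t)) has_integral (2 * pi * (h 0 * h 0))) {0..2*pi}"
    using holomorphic_on_imp_continuous_on holomorphic_on_subset by fastforce
  then have "2 * pi * (cmod (h 0))\<^sup>2 = norm (integral {0..2*pi} (\<lambda>t. h (cis t) * h (cis t)))"
    by (simp add: integral_unique norm_mult power2_eq_square)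
  also have "\<dots> \<le> integral {0..2*pi} (\<lambda>t. (cmod (h (cis t)))\<^sup>2)"
    by (intro integral_norm_bound_integral integrable_continuous_interval continuous_intros
        continuous_on_compose2[OF cont[of UNIV]]) (auto simp: norm_mult power2_eq_square)
  finally show ?thesis .
qed

lemma holomorphic_Cd_sq_norm_le_circle:
  assumes "holomorphic_Cd f"
  shows "ennreal (2 * pi) * ennreal ((cmod (f z))\<^sup>2)
    \<le> (\<integral>\<^sup>+t. ennreal ((cmod (f (z + cis t *s v)))\<^sup>2) * indicator {0..2*pi} t \<partial>lborel)"
proof -
  let ?g = "\<lambda>t. (cmod (f (z + cis t *s v)))\<^sup>2"
  have line: "(\<lambda>t. f (z + t *s v)) holomorphic_on UNIV"
    by (rule holomorphic_Cd_complex_line[OF assms])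
  have cont: "continuous_on {0..2*pi} ?g"
    by (intro continuous_intros continuous_on_compose2[OF holomorphic_on_imp_continuous_on[OF line]]) auto
  have "2 * pi * (cmod (f z))\<^sup>2 \<le> integral {0..2*pi} ?g"
    using holomorphic_sq_norm_le_circle_integral[OF line]
    by simp
  also have "ennreal \<dots> = (\<integral>\<^sup>+t. ennreal (?g t) * indicator {0..2*pi} t \<partial>lborel)"
    using integrable_continuous_interval[OF cont]
    by (intro nn_integral_has_integral_lebesgue'[symmetric]) (auto simp: has_integral_integral)
  finally show ?thesis
    by (simp add: ennreal_leI flip: ennreal_mult)
qed

lemma holomorphic_Cd_sq_norm_le_ball_integral:
  fixes f :: "complex^'n \<Rightarrow> complex"
  assumes f: "holomorphic_Cd f"
  shows "ennreal ((cmod (f z))\<^sup>2) * emeasure lborel (ball (0::complex^'n) r)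
    \<le> (\<integral>\<^sup>+v. indicator (ball 0 r) v * ennreal ((cmod (f (z + v)))\<^sup>2) \<partial>lborel)"
proof -
  (* integrate the circle inequality over v \<in> B; averaging over t gives back the integral over B
     because B and Lebesgue measure are invariant under v \<mapsto> cis t *s v *)
  define B where "B = ball (0::complex^'n) r"
  define G where "G v = indicator B v * ennreal ((cmod (f (z + v)))\<^sup>2)" for v
  define c where "c = ennreal (2 * pi) * ennreal ((cmod (f z))\<^sup>2)"
  have [measurable]: "(\<lambda>v. (cmod (f (z + v)))\<^sup>2) \<in> borel_measurable borel"
    by (intro borel_measurable_continuous_onI continuous_intros
        continuous_on_compose2[OF holomorphic_Cd_continuous_on[OF f]]) auto
  have [measurable]: "B \<in> sets borel"
    by (simp add: B_def)
  have G_meas: "G \<in> borel_measurable borel"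
    unfolding G_def[abs_def] by measurable
  have "ennreal (2 * pi) * (ennreal ((cmod (f z))\<^sup>2) * emeasure lborel B) = c * emeasure lborel B"
    by (simp add: c_def mult.assoc)
  also have "\<dots> = (\<integral>\<^sup>+v. c * indicator B v \<partial>lborel)"
    by (rule nn_integral_cmult_indicator[symmetric]) simp
  also have "\<dots> \<le> (\<integral>\<^sup>+v. \<integral>\<^sup>+t. G (cis t *s v) * indicator {0..2*pi} t \<partial>lborel \<partial>lborel)"
  proof (rule nn_integral_mono)
    fix v :: "complex^'n"
    have "c * indicator B v
        \<le> indicator B v * (\<integral>\<^sup>+t. ennreal ((cmod (f (z + cis t *s v)))\<^sup>2) * indicator {0..2*pi} t \<partial>lborel)"
      unfolding c_def by (subst mult.commute, intro mult_left_mono holomorphic_Cd_sq_norm_le_circle[OF f]) simp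
    also have "\<dots> = (\<integral>\<^sup>+t. indicator B v * (ennreal ((cmod (f (z + cis t *s v)))\<^sup>2) * indicator {0..2*pi} t) \<partial>lborel)"
    proof -
      have line: "continuous_on UNIV (\<lambda>t. f (z + t *s v))"
        using holomorphic_Cd_complex_line[OF f] holomorphic_on_imp_continuous_on by blast
      have [measurable]: "(\<lambda>t. (cmod (f (z + cis t *s v)))\<^sup>2) \<in> borel_measurable borel"
        by (intro borel_measurable_continuous_onI continuous_intros continuous_on_compose2[OF line]) auto
      show ?thesis
        by (rule nn_integral_cmult[symmetric]) measurable
    qed
    also have "\<dots> = (\<integral>\<^sup>+t. G (cis t *s v) * indicator {0..2*pi} t \<partial>lborel)"
      by (simp add: G_def B_def indicator_def norm_vector_smult mult_ac)
    finally show "c * indicator B v \<le> (\<integral>\<^sup>+t. G (cis t *s v) * indicator {0..2*pi} t \<partial>lborel)" .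
  qed
  also have "\<dots> = ennreal (2 * pi) * (\<integral>\<^sup>+v. G v \<partial>lborel)"
    by (rule nn_integral_circle_average[OF G_meas])
  finally show ?thesis
    by (simp add: G_def B_def ennreal_mult_le_mult_iff)
qed

lemma holomorphic_Cd_sq_norm_le_weighted_integral:
  fixes f :: "complex^'n \<Rightarrow> complex"
  assumes f: "holomorphic_Cd f" and m: "0 \<le> m" "\<And>y. dist z y < 1 \<Longrightarrow> m \<le> w y"
  shows "ennreal ((cmod (f z))\<^sup>2 * measure lborel (ball (0::complex^'n) 1) * m)
    \<le> (\<integral>\<^sup>+y. ennreal ((cmod (f y))\<^sup>2 * w y) \<partial>lborel)"
proof -
  define G where "G y = indicator (ball z 1) y * ennreal ((cmod (f y))\<^sup>2)" for y
  have [measurable]: "(\<lambda>y. (cmod (f y))\<^sup>2) \<in> borel_measurable borel"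
    by (intro borel_measurable_continuous_onI continuous_intros holomorphic_Cd_continuous_on[OF f])
  have [measurable]: "ball z 1 \<in> sets borel"
    by simp
  have G_meas: "G \<in> borel_measurable borel"
    unfolding G_def[abs_def] by measurable
  have "emeasure lborel (ball (0::complex^'n) 1) = ennreal (measure lborel (ball (0::complex^'n) 1))"
    using emeasure_lborel_ball_finite[of "0::complex^'n" 1] by (intro emeasure_eq_ennreal_measure) (simp add: less_top)
  then have "ennreal ((cmod (f z))\<^sup>2 * measure lborel (ball (0::complex^'n) 1) * m)
      = ennreal m * (ennreal ((cmod (f z))\<^sup>2) * emeasure lborel (ball (0::complex^'n) 1))"
    using m(1) by (simp add: ennreal_mult mult_ac)
  also have "\<dots> \<le> ennreal m * (\<integral>\<^sup>+v. indicator (ball 0 1) v * ennreal ((cmod (f (z + v)))\<^sup>2) \<partial>lborel)"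
    by (intro mult_left_mono holomorphic_Cd_sq_norm_le_ball_integral[OF f]) simp
  also have "\<dots> = ennreal m * (\<integral>\<^sup>+v. G (v + z) \<partial>lborel)"
    by (simp add: G_def indicator_def dist_norm add.commute)
  also have "\<dots> = ennreal m * (\<integral>\<^sup>+y. G y \<partial>lborel)"
    by (simp add: nn_integral_lborel_translate[OF G_meas])
  also have "\<dots> = (\<integral>\<^sup>+y. ennreal m * G y \<partial>lborel)"
    using G_meas by (intro nn_integral_cmult[symmetric]) simp
  also have "\<dots> \<le> (\<integral>\<^sup>+y. ennreal ((cmod (f y))\<^sup>2 * w y) \<partial>lborel)"
  proof (rule nn_integral_mono)
    fix y
    show "ennreal m * G y \<le> ennreal ((cmod (f y))\<^sup>2 * w y)"
      using m(1) m(2)[of y]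
      by (auto simp: G_def indicator_def ennreal_mult[symmetric] mult.commute intro!: ennreal_leI mult_right_mono)
  qed
  finally show ?thesis .
qed

lemma weight_nonneg: "0 \<le> weight \<sigma> \<sigma>0 z"
  by (simp add: weight_def)

lemma weight_locally_bounded_below:
  assumes "\<sigma> \<noteq> 0"
  obtains m where "0 < m" "\<And>y::complex^'n. norm y \<le> R \<Longrightarrow> m \<le> weight \<sigma> \<sigma>0 y"
proof
  let ?m = "(exp 1 * \<sigma>\<^sup>2 / (2 * pi)) ^ CARD('n) * exp (- (\<sigma>\<^sup>2 * R\<^sup>2)) * exp (- 1)"
  show "0 < ?m"
    using assms by simp
  fix y :: "complex^'n"
  assume "norm y \<le> R"
  then have "(norm y)\<^sup>2 \<le> R\<^sup>2"
    by (simp add: power_mono)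
  then have "exp (- (\<sigma>\<^sup>2 * R\<^sup>2)) \<le> exp (- (\<sigma>\<^sup>2 * (norm y)\<^sup>2))"
    by (simp add: mult_left_mono)
  moreover have "exp (- 1) \<le> exp (exp (- (\<sigma>0\<^sup>2 * (norm y)\<^sup>2)) - 1)"
    by simp
  ultimately show "?m \<le> weight \<sigma> \<sigma>0 y"
    unfolding weight_def by (intro mult_mono) auto
qed

definition H_norm :: "real \<Rightarrow> real \<Rightarrow> (complex^'n \<Rightarrow> complex) \<Rightarrow> real" where
  "H_norm \<sigma> \<sigma>0 f = sqrt (LINT z|lborel. (cmod (f z))\<^sup>2 * weight \<sigma> \<sigma>0 z)"

lemma H_norm_nonneg: "0 \<le> H_norm \<sigma> \<sigma>0 f"
  unfolding H_norm_def by (intro real_sqrt_ge_zero integral_nonneg_AE AE_I2) (simp add: weight_nonneg)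

lemma inner_H_self: "inner_H \<sigma> \<sigma>0 f f = complex_of_real ((H_norm \<sigma> \<sigma>0 f)\<^sup>2)"
proof -
  have "inner_H \<sigma> \<sigma>0 f f = (CLINT z|lborel. complex_of_real ((cmod (f z))\<^sup>2 * weight \<sigma> \<sigma>0 z))"
    unfolding inner_H_def by (simp add: complex_mult_cnj cmod_def)
  also have "\<dots> = complex_of_real (LINT z|lborel. (cmod (f z))\<^sup>2 * weight \<sigma> \<sigma>0 z)"
    by (rule integral_complex_of_real)
  finally show ?thesis
    by (simp add: H_norm_def integral_nonneg_AE weight_nonneg)
qed

lemma continuous_on_weight: "continuous_on S (weight \<sigma> \<sigma>0)"
  unfolding weight_def[abs_def] by (intro continuous_intros)

lemma borel_measurable_weighted_sq_norm[measurable]: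
  "holomorphic_Cd f \<Longrightarrow> (\<lambda>z. (cmod (f z))\<^sup>2 * weight \<sigma> \<sigma>0 z) \<in> borel_measurable borel"
  by (intro borel_measurable_continuous_onI continuous_intros continuous_on_weight
      holomorphic_Cd_continuous_on)

lemma nn_integral_weighted_sq_norm:
  assumes "f \<in> H_space \<sigma> \<sigma>0"
  shows "(\<integral>\<^sup>+z. ennreal ((cmod (f z))\<^sup>2 * weight \<sigma> \<sigma>0 z) \<partial>lborel) = ennreal ((H_norm \<sigma> \<sigma>0 f)\<^sup>2)"
  using assms unfolding H_space_def H_norm_def
  by (simp add: nn_integral_eq_integral weight_nonneg integral_nonneg_AE)

lemma H_space_zero: "(\<lambda>x. 0) \<in> H_space \<sigma> \<sigma>0"
  unfolding H_space_def holomorphic_Cd_def by (auto intro: exI[of _ "\<lambda>_. 0"])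

lemma H_space_cmult:
  assumes "f \<in> H_space \<sigma> \<sigma>0"
  shows "(\<lambda>x. c * f x) \<in> H_space \<sigma> \<sigma>0"
proof -
  have "integrable lborel (\<lambda>z. (cmod c)\<^sup>2 * ((cmod (f z))\<^sup>2 * weight \<sigma> \<sigma>0 z))"
    using assms by (simp add: H_space_def)
  with assms show ?thesis
    by (simp add: H_space_def holomorphic_Cd_cmult norm_mult power_mult_distrib mult.assoc)
qed

lemma H_space_add:
  assumes f: "f \<in> H_space \<sigma> \<sigma>0" and g: "g \<in> H_space \<sigma> \<sigma>0"
  shows "(\<lambda>x. f x + g x) \<in> H_space \<sigma> \<sigma>0"
proof -
  have hol: "holomorphic_Cd (\<lambda>x. f x + g x)"
    using f g by (simp add: H_space_def holomorphic_Cd_add)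
  have "integrable lborel (\<lambda>z. 2 * ((cmod (f z))\<^sup>2 * weight \<sigma> \<sigma>0 z) + 2 * ((cmod (g z))\<^sup>2 * weight \<sigma> \<sigma>0 z))"
    using f g by (simp add: H_space_def)
  then have "integrable lborel (\<lambda>z. (cmod (f z + g z))\<^sup>2 * weight \<sigma> \<sigma>0 z)"
  proof (rule Bochner_Integration.integrable_bound)
    show "(\<lambda>z. (cmod (f z + g z))\<^sup>2 * weight \<sigma> \<sigma>0 z) \<in> borel_measurable lborel"
      using hol by simp
    show "AE z in lborel. norm ((cmod (f z + g z))\<^sup>2 * weight \<sigma> \<sigma>0 z)
        \<le> norm (2 * ((cmod (f z))\<^sup>2 * weight \<sigma> \<sigma>0 z) + 2 * ((cmod (g z))\<^sup>2 * weight \<sigma> \<sigma>0 z))"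
    proof (rule AE_I2)
      fix z
      have "(cmod (f z + g z))\<^sup>2 \<le> (cmod (f z) + cmod (g z))\<^sup>2"
        by (intro power_mono norm_triangle_ineq) simp
      also have "\<dots> \<le> 2 * (cmod (f z))\<^sup>2 + 2 * (cmod (g z))\<^sup>2"
        using sum_squares_bound[of "cmod (f z)" "cmod (g z)"] by (simp add: power2_sum)
      finally have "(cmod (f z + g z))\<^sup>2 * weight \<sigma> \<sigma>0 z
          \<le> (2 * (cmod (f z))\<^sup>2 + 2 * (cmod (g z))\<^sup>2) * weight \<sigma> \<sigma>0 z"
        by (rule mult_right_mono) (rule weight_nonneg)
      then show "norm ((cmod (f z + g z))\<^sup>2 * weight \<sigma> \<sigma>0 z)
          \<le> norm (2 * ((cmod (f z))\<^sup>2 * weight \<sigma> \<sigma>0 z) + 2 * ((cmod (g z))\<^sup>2 * weight \<sigma> \<sigma>0 z))"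
        by (simp add: weight_nonneg distrib_right mult.assoc)
    qed
  qed
  with hol show ?thesis
    by (simp add: H_space_def)
qed

lemma H_space_diff:
  assumes "f \<in> H_space \<sigma> \<sigma>0" "g \<in> H_space \<sigma> \<sigma>0"
  shows "(\<lambda>x. f x - g x) \<in> H_space \<sigma> \<sigma>0"
  using H_space_add[OF assms(1) H_space_cmult[OF assms(2), of "-1"]] by simp

lemma integrable_inner_H:
  assumes f: "f \<in> H_space \<sigma> \<sigma>0" and g: "g \<in> H_space \<sigma> \<sigma>0"
  shows "integrable lborel (\<lambda>z. f z * cnj (g z) * complex_of_real (weight \<sigma> \<sigma>0 z))"
proof -
  have "integrable lborel (\<lambda>z. (cmod (f z))\<^sup>2 * weight \<sigma> \<sigma>0 z + (cmod (g z))\<^sup>2 * weight \<sigma> \<sigma>0 z)"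
    using f g by (simp add: H_space_def)
  then show ?thesis
  proof (rule Bochner_Integration.integrable_bound)
    have "(\<lambda>z. f z * cnj (g z) * complex_of_real (weight \<sigma> \<sigma>0 z)) \<in> borel_measurable borel"
      using f g unfolding H_space_def
      by (intro borel_measurable_continuous_onI continuous_intros holomorphic_Cd_continuous_on
          continuous_on_weight) auto
    then show "(\<lambda>z. f z * cnj (g z) * complex_of_real (weight \<sigma> \<sigma>0 z)) \<in> borel_measurable lborel"
      by simp
    show "AE z in lborel. norm (f z * cnj (g z) * complex_of_real (weight \<sigma> \<sigma>0 z))
        \<le> norm ((cmod (f z))\<^sup>2 * weight \<sigma> \<sigma>0 z + (cmod (g z))\<^sup>2 * weight \<sigma> \<sigma>0 z)"
    proof (rule AE_I2)
      fix z
      have "cmod (f z) * cmod (g z) \<le> (cmod (f z))\<^sup>2 + (cmod (g z))\<^sup>2"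
        using sum_squares_bound[of "cmod (f z)" "cmod (g z)"]
          mult_nonneg_nonneg[OF norm_ge_zero norm_ge_zero, of "f z" "g z"] by linarith
      then have "cmod (f z) * cmod (g z) * weight \<sigma> \<sigma>0 z
          \<le> ((cmod (f z))\<^sup>2 + (cmod (g z))\<^sup>2) * weight \<sigma> \<sigma>0 z"
        by (rule mult_right_mono) (rule weight_nonneg)
      then show "norm (f z * cnj (g z) * complex_of_real (weight \<sigma> \<sigma>0 z))
          \<le> norm ((cmod (f z))\<^sup>2 * weight \<sigma> \<sigma>0 z + (cmod (g z))\<^sup>2 * weight \<sigma> \<sigma>0 z)"
        by (simp add: norm_mult weight_nonneg distrib_right)
    qed
  qed
qed

lemma inner_H_add_left:
  assumes "f \<in> H_space \<sigma> \<sigma>0" "g \<in> H_space \<sigma> \<sigma>0" "h \<in> H_space \<sigma> \<sigma>0"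
  shows "inner_H \<sigma> \<sigma>0 (\<lambda>x. f x + g x) h = inner_H \<sigma> \<sigma>0 f h + inner_H \<sigma> \<sigma>0 g h"
  unfolding inner_H_def
  by (simp add: distrib_right integrable_inner_H assms)

lemma inner_H_cmult_left: "inner_H \<sigma> \<sigma>0 (\<lambda>x. c * f x) g = c * inner_H \<sigma> \<sigma>0 f g"
  unfolding inner_H_def by (simp add: mult.assoc)

lemma inner_H_commute: "inner_H \<sigma> \<sigma>0 g f = cnj (inner_H \<sigma> \<sigma>0 f g)"
  unfolding inner_H_def Bochner_Integration.integral_cnj[symmetric]
  by (rule Bochner_Integration.integral_cong) (simp_all add: mult_ac)

lemma H_space_eval_bound:
  assumes "\<sigma> \<noteq> 0"
  obtains C where "\<And>(f::complex^'n \<Rightarrow> complex) z. f \<in> H_space \<sigma> \<sigma>0 \<Longrightarrow> norm z \<le> R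
    \<Longrightarrow> cmod (f z) \<le> C * H_norm \<sigma> \<sigma>0 f"
proof -
  obtain m where m: "0 < m" "\<And>y::complex^'n. norm y \<le> R + 1 \<Longrightarrow> m \<le> weight \<sigma> \<sigma>0 y"
    using weight_locally_bounded_below[OF assms] by blast
  define K where "K = measure lborel (ball (0::complex^'n) 1) * m"
  have K: "0 < K"
    using content_ball_pos[of 1 "0::complex^'n"] m(1) by (simp add: K_def)
  show ?thesis
  proof (rule that[of "1 / sqrt K"])
    fix f :: "complex^'n \<Rightarrow> complex" and z :: "complex^'n"
    assume f: "f \<in> H_space \<sigma> \<sigma>0" and z: "norm z \<le> R"
    have "m \<le> weight \<sigma> \<sigma>0 y" if "dist z y < 1" for y
      using that z norm_triangle_ineq2[of y z] by (intro m(2)) (simp add: dist_norm norm_minus_commute)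
    then have "ennreal ((cmod (f z))\<^sup>2 * measure lborel (ball (0::complex^'n) 1) * m)
        \<le> (\<integral>\<^sup>+y. ennreal ((cmod (f y))\<^sup>2 * weight \<sigma> \<sigma>0 y) \<partial>lborel)"
      using f m(1) by (intro holomorphic_Cd_sq_norm_le_weighted_integral) (auto simp: H_space_def)
    then have "ennreal ((cmod (f z))\<^sup>2 * K) \<le> ennreal ((H_norm \<sigma> \<sigma>0 f)\<^sup>2)"
      using f by (simp add: K_def mult.assoc nn_integral_weighted_sq_norm)
    then have "(cmod (f z) * sqrt K)\<^sup>2 \<le> (H_norm \<sigma> \<sigma>0 f)\<^sup>2"
      using K by (simp add: power_mult_distrib)
    then have "cmod (f z) * sqrt K \<le> H_norm \<sigma> \<sigma>0 f"
      by (rule power2_le_imp_le) (rule H_norm_nonneg)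
    then show "cmod (f z) \<le> 1 / sqrt K * H_norm \<sigma> \<sigma>0 f"
      using K by (simp add: field_simps)
  qed
qed

lemma H_space_inner_self_eq_zero:
  assumes "\<sigma> \<noteq> 0" "f \<in> H_space \<sigma> \<sigma>0" "inner_H \<sigma> \<sigma>0 f f = 0"
  shows "f = (\<lambda>x. 0)"
proof
  fix z
  obtain C where "cmod (f z) \<le> C * H_norm \<sigma> \<sigma>0 f"
    using H_space_eval_bound[OF assms(1), of \<sigma>0 "norm z"] assms(2) by blast
  with assms(3) show "f z = 0"
    by (simp add: inner_H_self)
qed

lemma holomorphic_Cd_derivative_bound:
  fixes g :: "complex^'n \<Rightarrow> complex"
  assumes g: "holomorphic_Cd g" and L: "(g has_derivative L) (at x)" and r: "0 < r"
    and B: "\<And>y. y \<in> cball x r \<Longrightarrow> cmod (g y) \<le> B"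
  shows "cmod (L h) \<le> B / r * norm h"
proof (cases "h = 0")
  case True
  then show ?thesis
    using linear_0[OF has_derivative_linear[OF L]] by simp
next
  case False
  define v where "v = (1 / norm h) *\<^sub>R h"
  have v: "norm v = 1" "h = norm h *\<^sub>R v"
    using False by (simp_all add: v_def)
  define \<phi> where "\<phi> t = g (x + t *s v)" for t
  have "(\<phi> has_field_derivative L v) (at 0)"
    unfolding \<phi>_def using L holomorphic_Cd_derivative_complex_linear[OF g L]
    by (intro has_field_derivative_complex_line) simp_all
  then have "deriv \<phi> 0 = L v"
    by (rule DERIV_imp_deriv)
  moreover have "norm ((deriv ^^ 1) \<phi> 0) \<le> fact 1 * B / r ^ 1"
  proof (rule Cauchy_inequality)
    show "\<phi> holomorphic_on ball 0 r" "continuous_on (cball 0 r) \<phi>"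
      unfolding \<phi>_def using holomorphic_Cd_complex_line[OF g]
      by (auto intro: holomorphic_on_imp_continuous_on)
    show "norm (\<phi> t) \<le> B" if "norm (0 - t) = r" for t
      unfolding \<phi>_def using that v(1) by (intro B) (simp add: dist_norm norm_vector_smult)
  qed (use r in simp)
  ultimately have "cmod (L v) \<le> B / r"
    by simp
  then have "norm h * cmod (L v) \<le> norm h * (B / r)"
    by (rule mult_left_mono) simp
  moreover have "L h = norm h *\<^sub>R L v"
    by (subst v(2)) (rule linear_scale[OF has_derivative_linear[OF L]])
  ultimately show ?thesis
    by (simp add: mult.commute)
qed

lemma holomorphic_Cd_has_derivative_Blinfun:
  assumes "holomorphic_Cd f"
  shows "(f has_derivative blinfun_apply (Blinfun (frechet_derivative f (at x)))) (at x)"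
proof -
  obtain L where L: "(f has_derivative L) (at x)"
    using assms unfolding holomorphic_Cd_def by blast
  then show ?thesis
    unfolding frechet_derivative_at[OF L, symmetric]
    by (simp add: bounded_linear_Blinfun_apply has_derivative_bounded_linear)
qed

lemma uniformly_Cauchy_on_holomorphic_Cd_derivatives:
  fixes F :: "nat \<Rightarrow> complex^'n \<Rightarrow> complex"
  assumes hol: "\<And>n. holomorphic_Cd (F n)" and UC: "uniformly_Cauchy_on (cball c (R + 1)) F"
  shows "uniformly_Cauchy_on (ball c R) (\<lambda>n x. Blinfun (frechet_derivative (F n) (at x)))"
proof (rule uniformly_Cauchy_onI)
  fix e :: real
  assume e: "0 < e"
  define D where "D n x = Blinfun (frechet_derivative (F n) (at x))" for n x
  note D = holomorphic_Cd_has_derivative_Blinfun[OF hol, folded D_def]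
  obtain N where N: "\<And>y m n. y \<in> cball c (R + 1) \<Longrightarrow> m \<ge> N \<Longrightarrow> n \<ge> N \<Longrightarrow> dist (F m y) (F n y) < e / 2"
    using UC e unfolding uniformly_Cauchy_on_def by (meson half_gt_zero)
  have "dist (D m x) (D n x) < e" if "m \<ge> N" "n \<ge> N" "x \<in> ball c R" for m n x
  proof -
    have close: "cmod (F m y - F n y) \<le> e / 2" if "y \<in> cball x 1" for y
    proof -
      have "y \<in> cball c (R + 1)"
        using \<open>x \<in> ball c R\<close> that dist_triangle[of c y x] by simp
      then show ?thesis
        using N \<open>m \<ge> N\<close> \<open>n \<ge> N\<close> by (fastforce simp: dist_norm)
    qed
    have "cmod (blinfun_apply (D m x - D n x) h) \<le> e / 2 * norm h" for h
      using holomorphic_Cd_derivative_bound[OF holomorphic_Cd_diff[OF hol hol]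
          has_derivative_diff[OF D D] zero_less_one close]
      by (simp add: blinfun.diff_left)
    then have "norm (D m x - D n x) \<le> e / 2"
      using e by (intro norm_blinfun_bound) auto
    then show ?thesis
      using e by (simp add: dist_norm)
  qed
  then show "\<exists>M. \<forall>x\<in>ball c R. \<forall>m\<ge>M. \<forall>n\<ge>M. dist (D m x) (D n x) < e"
    by blast
qed

lemma uniform_limit_blinfun_apply:
  fixes D :: "'i \<Rightarrow> 'x \<Rightarrow> 'a::real_normed_vector \<Rightarrow>\<^sub>L 'b::real_normed_vector"
  assumes "uniform_limit S D G F" "0 < e"
  shows "\<forall>\<^sub>F n in F. \<forall>x\<in>S. \<forall>h. norm (blinfun_apply (D n x) h - blinfun_apply (G x) h) \<le> e * norm h"
  using uniform_limitD[OF assms]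
proof eventually_elim
  case (elim n)
  show ?case
  proof (intro ballI allI)
    fix x and h :: 'a
    assume "x \<in> S"
    then have "norm (D n x - G x) * norm h \<le> e * norm h"
      using elim by (intro mult_right_mono) (auto simp: dist_norm)
    then show "norm (blinfun_apply (D n x) h - blinfun_apply (G x) h) \<le> e * norm h"
      using norm_blinfun[of "D n x - G x" h] by (simp add: blinfun.diff_left)
  qed
qed

lemma holomorphic_Cd_uniform_limit:
  fixes F :: "nat \<Rightarrow> complex^'n \<Rightarrow> complex"
  assumes hol: "\<And>n. holomorphic_Cd (F n)"
    and lim: "\<And>R. uniform_limit (cball 0 R) F f sequentially"
  shows "holomorphic_Cd f"
  unfolding holomorphic_Cd_def
proof
  fix z :: "complex^'n"
  define S where "S = ball (0::complex^'n) (norm z + 1)"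
  (* viewed in the Banach space of bounded linear maps, the derivatives are uniformly Cauchy
     by the Cauchy estimate, so has_derivative_sequence applies *)
  define D where "D n x = Blinfun (frechet_derivative (F n) (at x))" for n x
  note D = holomorphic_Cd_has_derivative_Blinfun[OF hol, folded D_def]
  have "uniformly_Cauchy_on (cball 0 (norm z + 1 + 1)) F"
    by (rule uniformly_convergent_Cauchy, rule uniformly_convergentI, rule lim)
  then have "uniformly_Cauchy_on S D"
    unfolding S_def D_def by (rule uniformly_Cauchy_on_holomorphic_Cd_derivatives[OF hol])
  then obtain G where G: "uniform_limit S D G sequentially"
    using Cauchy_uniformly_convergent uniformly_convergent_on_def by blast
  have "\<exists>g. \<forall>x\<in>S. (\<lambda>n. F n x) \<longlonglongrightarrow> g x \<and> (g has_derivative blinfun_apply (G x)) (at x within S)"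
  proof (rule has_derivative_sequence[where ?x0.0 = z])
    show "\<forall>\<^sub>F n in sequentially. \<forall>x\<in>S. \<forall>h. norm (D n x h - G x h) \<le> e * norm h" if "0 < e" for e
      using G that by (rule uniform_limit_blinfun_apply)
    show "(\<lambda>n. F n z) \<longlonglongrightarrow> f z"
      using tendsto_uniform_limitI[OF lim[of "norm z"]] by simp
  qed (auto simp: S_def intro: has_derivative_at_withinI D)
  then obtain g where g: "\<And>x. x \<in> S \<Longrightarrow> (\<lambda>n. F n x) \<longlonglongrightarrow> g x \<and> (g has_derivative G x) (at x within S)"
    by blast
  have "g x = f x" if "x \<in> S" for x
    using g[OF that] tendsto_uniform_limitI[OF lim[of "norm x"]] LIMSEQ_unique by fastforce
  moreover have "z \<in> S" "open S"
    by (simp_all add: S_def)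
  ultimately have "(f has_derivative G z) (at z)"
    using g[of z] at_within_open[of z S] has_derivative_transform_within_open[of g "G z" z UNIV S f]
    by simp
  moreover have "G z (c *s v) = c * G z v" for c v
  proof -
    have D_G: "(\<lambda>n. D n z u) \<longlonglongrightarrow> G z u" for u
      using tendsto_uniform_limitI[OF G \<open>z \<in> S\<close>] by (intro blinfun.tendsto) auto
    have "D n z (c *s v) = c * D n z v" for n
      by (rule holomorphic_Cd_derivative_complex_linear[OF hol D])
    then have "(\<lambda>n. D n z (c *s v)) \<longlonglongrightarrow> c * G z v"
      using tendsto_mult_left[OF D_G[of v], of c] by simp
    with D_G[of "c *s v"] show ?thesis
      by (rule LIMSEQ_unique)
  qed
  ultimately show "\<exists>L. (f has_derivative L) (at z) \<and> (\<forall>c v. L (c *s v) = c * L v)"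
    by blast
qed

lemma nn_integral_le_of_pointwise_limit:
  assumes "\<And>m. u m \<in> borel_measurable M" "\<And>x. (\<lambda>m. u m x) \<longlonglongrightarrow> v x"
    and "\<forall>\<^sub>F m in sequentially. integral\<^sup>N M (u m) \<le> c"
  shows "integral\<^sup>N M v \<le> c"
proof -
  have "integral\<^sup>N M v = (\<integral>\<^sup>+x. liminf (\<lambda>m. u m x) \<partial>M)"
    using assms(2) by (intro nn_integral_cong) (metis lim_imp_Liminf trivial_limit_sequentially)
  also have "\<dots> \<le> liminf (\<lambda>m. integral\<^sup>N M (u m))"
    using assms(1) by (rule nn_integral_liminf)
  also have "\<dots> \<le> limsup (\<lambda>m. integral\<^sup>N M (u m))"
    by (rule Liminf_le_Limsup) simp
  also have "\<dots> \<le> c"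
    using assms(3) by (rule Limsup_bounded)
  finally show ?thesis .
qed

lemma H_space_pointwise_limit:
  assumes G: "\<And>m. G m \<in> H_space \<sigma> \<sigma>0" and g: "holomorphic_Cd g" and lim: "\<And>x. (\<lambda>m. G m x) \<longlonglongrightarrow> g x"
    and bound: "\<forall>\<^sub>F m in sequentially. H_norm \<sigma> \<sigma>0 (G m) \<le> c"
  shows "g \<in> H_space \<sigma> \<sigma>0" "H_norm \<sigma> \<sigma>0 g \<le> c"
proof -
  obtain N where "\<And>m. m \<ge> N \<Longrightarrow> H_norm \<sigma> \<sigma>0 (G m) \<le> c"
    using bound unfolding eventually_sequentially by blast
  then have c: "0 \<le> c"
    using H_norm_nonneg[of \<sigma> \<sigma>0 "G N"] by fastforce
  have I: "(\<integral>\<^sup>+x. ennreal ((cmod (g x))\<^sup>2 * weight \<sigma> \<sigma>0 x) \<partial>lborel) \<le> ennreal (c\<^sup>2)"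
  proof (rule nn_integral_le_of_pointwise_limit)
    show "(\<lambda>x. ennreal ((cmod (G m x))\<^sup>2 * weight \<sigma> \<sigma>0 x)) \<in> borel_measurable lborel" for m
      using G[of m] by (simp add: H_space_def)
    show "(\<lambda>m. ennreal ((cmod (G m x))\<^sup>2 * weight \<sigma> \<sigma>0 x)) \<longlonglongrightarrow> ennreal ((cmod (g x))\<^sup>2 * weight \<sigma> \<sigma>0 x)" for x
      by (intro tendsto_ennrealI tendsto_intros lim)
    show "\<forall>\<^sub>F m in sequentially. (\<integral>\<^sup>+x. ennreal ((cmod (G m x))\<^sup>2 * weight \<sigma> \<sigma>0 x) \<partial>lborel) \<le> ennreal (c\<^sup>2)"
      using bound by eventually_elim (simp add: nn_integral_weighted_sq_norm G H_norm_nonneg power_mono)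
  qed
  have "integrable lborel (\<lambda>x. (cmod (g x))\<^sup>2 * weight \<sigma> \<sigma>0 x)"
  proof (rule integrableI_bounded)
    show "(\<lambda>x. (cmod (g x))\<^sup>2 * weight \<sigma> \<sigma>0 x) \<in> borel_measurable lborel"
      using g by simp
    show "(\<integral>\<^sup>+x. ennreal (norm ((cmod (g x))\<^sup>2 * weight \<sigma> \<sigma>0 x)) \<partial>lborel) < \<infinity>"
      using I by (simp add: weight_nonneg le_less_trans)
  qed
  with g show gH: "g \<in> H_space \<sigma> \<sigma>0"
    by (simp add: H_space_def)
  have "(H_norm \<sigma> \<sigma>0 g)\<^sup>2 \<le> c\<^sup>2"
    using I c by (simp add: nn_integral_weighted_sq_norm[OF gH])
  then show "H_norm \<sigma> \<sigma>0 g \<le> c"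
    using c by (rule power2_le_imp_le)
qed

lemma H_space_uniformly_Cauchy_on_cball:
  fixes F :: "nat \<Rightarrow> complex^'n \<Rightarrow> complex"
  assumes \<sigma>: "\<sigma> \<noteq> 0" and F: "\<And>n. F n \<in> H_space \<sigma> \<sigma>0"
    and Cauchy: "\<And>e. 0 < e \<Longrightarrow> \<exists>N. \<forall>m\<ge>N. \<forall>n\<ge>N. H_norm \<sigma> \<sigma>0 (\<lambda>x. F m x - F n x) < e"
  shows "uniformly_Cauchy_on (cball 0 R) F"
proof (rule uniformly_Cauchy_onI)
  fix e :: real
  assume e: "0 < e"
  obtain C where C: "\<And>(f::complex^'n \<Rightarrow> complex) z. f \<in> H_space \<sigma> \<sigma>0 \<Longrightarrow> norm z \<le> R
      \<Longrightarrow> cmod (f z) \<le> C * H_norm \<sigma> \<sigma>0 f"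
    using H_space_eval_bound[OF \<sigma>] by blast
  obtain N where N: "\<forall>m\<ge>N. \<forall>n\<ge>N. H_norm \<sigma> \<sigma>0 (\<lambda>x. F m x - F n x) < e / (\<bar>C\<bar> + 1)"
    using Cauchy[of "e / (\<bar>C\<bar> + 1)"] e by auto
  have "dist (F m x) (F n x) < e" if "x \<in> cball 0 R" "m \<ge> N" "n \<ge> N" for x m n
  proof -
    let ?d = "H_norm \<sigma> \<sigma>0 (\<lambda>x. F m x - F n x)"
    have "dist (F m x) (F n x) \<le> C * ?d"
      using C[OF H_space_diff[OF F F], of x] that(1) by (simp add: dist_norm)
    also have "\<dots> \<le> (\<bar>C\<bar> + 1) * ?d"
      using H_norm_nonneg by (intro mult_right_mono) auto
    also have "\<dots> < (\<bar>C\<bar> + 1) * (e / (\<bar>C\<bar> + 1))"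
      using N that(2,3) by (intro mult_strict_left_mono) auto
    finally show ?thesis
      by simp
  qed
  then show "\<exists>M. \<forall>x\<in>cball 0 R. \<forall>m\<ge>M. \<forall>n\<ge>M. dist (F m x) (F n x) < e"
    by blast
qed

lemma uniformly_Cauchy_on_cballs_uniform_limit:
  fixes F :: "nat \<Rightarrow> 'a::real_normed_vector \<Rightarrow> 'b::complete_space"
  assumes UC: "\<And>R. uniformly_Cauchy_on (cball 0 R) F"
  obtains f where "\<And>R. uniform_limit (cball 0 R) F f sequentially"
proof
  define f where "f x = lim (\<lambda>n. F n x)" for x
  fix R
  obtain l where l: "uniform_limit (cball 0 R) F l sequentially"
    using Cauchy_uniformly_convergent[OF UC] uniformly_convergent_on_def by blast
  have "l x = f x" if "x \<in> cball 0 R" for x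
    using tendsto_uniform_limitI[OF l that] unfolding f_def by (metis limI)
  with l show "uniform_limit (cball 0 R) F f sequentially"
    using uniform_limit_cong'[of "cball 0 R" F F l f] by simp
qed

lemma H_space_complete:
  fixes F :: "nat \<Rightarrow> complex^'n \<Rightarrow> complex"
  assumes \<sigma>: "\<sigma> \<noteq> 0" and F: "\<And>n. F n \<in> H_space \<sigma> \<sigma>0"
    and Cauchy: "\<And>e. 0 < e \<Longrightarrow> \<exists>N. \<forall>m\<ge>N. \<forall>n\<ge>N. H_norm \<sigma> \<sigma>0 (\<lambda>x. F m x - F n x) < e"
  shows "\<exists>f\<in>H_space \<sigma> \<sigma>0. (\<lambda>n. H_norm \<sigma> \<sigma>0 (\<lambda>x. F n x - f x)) \<longlonglongrightarrow> 0"
proof -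
  obtain f where unif: "\<And>R. uniform_limit (cball 0 R) F f sequentially"
    using uniformly_Cauchy_on_cballs_uniform_limit[OF H_space_uniformly_Cauchy_on_cball[OF \<sigma> F Cauchy]]
    by blast
  have lim: "(\<lambda>n. F n x) \<longlonglongrightarrow> f x" for x
    using tendsto_uniform_limitI[OF unif[of "norm x"]] by simp
  have hol: "holomorphic_Cd f"
    using F by (intro holomorphic_Cd_uniform_limit[OF _ unif]) (simp add: H_space_def)
  have tail: "(\<lambda>x. F n x - f x) \<in> H_space \<sigma> \<sigma>0 \<and> H_norm \<sigma> \<sigma>0 (\<lambda>x. F n x - f x) \<le> e"
    if N: "\<forall>m\<ge>N. \<forall>n\<ge>N. H_norm \<sigma> \<sigma>0 (\<lambda>x. F m x - F n x) < e" and n: "n \<ge> N" for e N n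
  proof -
    have "holomorphic_Cd (\<lambda>x. F n x - f x)"
      using F[of n] hol by (intro holomorphic_Cd_diff) (simp_all add: H_space_def)
    moreover have "(\<lambda>m. F n x - F m x) \<longlonglongrightarrow> F n x - f x" for x
      by (intro tendsto_diff tendsto_const lim)
    moreover have "\<forall>\<^sub>F m in sequentially. H_norm \<sigma> \<sigma>0 (\<lambda>x. F n x - F m x) \<le> e"
      using N n unfolding eventually_sequentially by (auto intro: less_imp_le)
    ultimately show ?thesis
      using H_space_pointwise_limit[where G = "\<lambda>m x. F n x - F m x", OF H_space_diff[OF F F]]
      by blast
  qed
  obtain N where "\<forall>m\<ge>N. \<forall>n\<ge>N. H_norm \<sigma> \<sigma>0 (\<lambda>x. F m x - F n x) < 1"
    using Cauchy[of 1] by auto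
  then have "(\<lambda>x. F N x - f x) \<in> H_space \<sigma> \<sigma>0"
    using tail by blast
  from H_space_diff[OF F[of N] this] have fH: "f \<in> H_space \<sigma> \<sigma>0"
    by simp
  have "(\<lambda>n. H_norm \<sigma> \<sigma>0 (\<lambda>x. F n x - f x)) \<longlonglongrightarrow> 0"
  proof (rule LIMSEQ_I)
    fix r :: real
    assume r: "0 < r"
    then obtain N where "\<forall>m\<ge>N. \<forall>n\<ge>N. H_norm \<sigma> \<sigma>0 (\<lambda>x. F m x - F n x) < r / 2"
      using Cauchy[of "r / 2"] by auto
    then have "norm (H_norm \<sigma> \<sigma>0 (\<lambda>x. F n x - f x) - 0) < r" if "n \<ge> N" for n
      using tail[of N "r / 2" n] that r H_norm_nonneg[of \<sigma> \<sigma>0 "\<lambda>x. F n x - f x"] by simp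
    then show "\<exists>N. \<forall>n\<ge>N. norm (H_norm \<sigma> \<sigma>0 (\<lambda>x. F n x - f x) - 0) < r"
      by blast
  qed
  with fH show ?thesis
    by blast
qed

lemma H_space_eval_tendsto:
  fixes F :: "nat \<Rightarrow> complex^'n \<Rightarrow> complex"
  assumes \<sigma>: "\<sigma> \<noteq> 0" and F: "\<And>n. F n \<in> H_space \<sigma> \<sigma>0" and f: "f \<in> H_space \<sigma> \<sigma>0"
    and lim: "(\<lambda>n. H_norm \<sigma> \<sigma>0 (\<lambda>y. F n y - f y)) \<longlonglongrightarrow> 0"
  shows "(\<lambda>n. F n x) \<longlonglongrightarrow> f x"
proof -
  obtain C where C: "\<And>(g::complex^'n \<Rightarrow> complex) z. g \<in> H_space \<sigma> \<sigma>0 \<Longrightarrow> norm z \<le> norm x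
      \<Longrightarrow> cmod (g z) \<le> C * H_norm \<sigma> \<sigma>0 g"
    using H_space_eval_bound[OF \<sigma>] by blast
  have "(\<lambda>n. F n x - f x) \<longlonglongrightarrow> 0"
  proof (rule Lim_null_comparison)
    show "\<forall>\<^sub>F n in sequentially. norm (F n x - f x) \<le> C * H_norm \<sigma> \<sigma>0 (\<lambda>y. F n y - f y)"
      using C[OF H_space_diff[OF F f] order_refl] by (intro always_eventually allI) simp
    show "(\<lambda>n. C * H_norm \<sigma> \<sigma>0 (\<lambda>y. F n y - f y)) \<longlonglongrightarrow> 0"
      using tendsto_mult_right_zero[OF lim] by simp
  qed
  then show ?thesis
    by (simp add: LIM_zero_iff)
qed

theorem corollary3p2:
  fixes \<sigma> \<sigma>0 :: real
  assumes "\<sigma> > 0" and "\<sigma>0 \<ge> 0"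
  shows "is_RKHS (H_space \<sigma> \<sigma>0 :: (complex ^ 'n \<Rightarrow> complex) set) (inner_H \<sigma> \<sigma>0)"
proof -
  have \<sigma>: "\<sigma> \<noteq> 0"
    using assms(1) by simp
  have norm: "sqrt (Re (inner_H \<sigma> \<sigma>0 f f)) = H_norm \<sigma> \<sigma>0 f" for f :: "complex^'n \<Rightarrow> complex"
    by (simp add: inner_H_self H_norm_nonneg)
  show ?thesis
    unfolding is_RKHS_def Let_def norm
    by (intro conjI ballI allI impI; (elim conjE)?)
       (auto simp: inner_H_self inner_H_cmult_left
         intro: H_space_zero H_space_add H_space_cmult inner_H_add_left inner_H_commute
           H_space_inner_self_eq_zero[OF \<sigma>] H_space_complete[OF \<sigma>] H_space_eval_tendsto[OF \<sigma>])
qed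

end
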